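(* Let $E$ be a topological vector space with a fundamental sequence of bounded sets. If $E$ has property (PS), then $E$ has countable $cs^\ast$-character.
   Context: A fundamental sequence of bounded sets is a sequence $(B_n)$ of bounded sets such that every bounded set lies in some $B_n$. A topological (additive) group has property (PS) if for every sequence $(g_n)$ converging to $0$ there are strictly increasing sequences $(m_k),(n_k)$ of natural numbers with $m_kg_{n_k}\to0$. A family $\mathcal{N}$ of subsets of $X$ is a $cs^\ast$-network at $x$ if for each sequence $(x_n)$ converging to $x$ and each neighborhood $O_x$ of $x$ there is $N\in\mathcal{N}$ with $x\in N\subseteq O_x$ and $\{n:x_n\in N\}$ infinite; the $cs^\ast$-character of $X$ is the supremum over $x\in X$ of the least cardinality of a $cs^\ast$-network at $x$. *)

theory Defs
  imports "HOL-Analysis.Analysis"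
begin

text \<open>A real topological vector space: a real vector space whose topology makes addition
  and negation continuous (class topological_ab_group_add) and in which scalar
  multiplication is jointly continuous.\<close>
definition tvs_scalar_continuous :: "('a::{real_vector, topological_space}) itself \<Rightarrow> bool" where
  "tvs_scalar_continuous _ \<longleftrightarrow>
     continuous_on (UNIV :: (real \<times> 'a) set) (\<lambda>p. fst p *\<^sub>R snd p)"

definition tvs_bounded :: "'a::{real_vector, topological_space} set \<Rightarrow> bool" where
  "tvs_bounded B \<longleftrightarrow>
     (\<forall>U. open U \<and> 0 \<in> U \<longrightarrow> (\<exists>t>0. \<forall>s::real. s \<ge> t \<longrightarrow> B \<subseteq> (\<lambda>x. s *\<^sub>R x) ` U))"

definition has_fundamental_bounded_sequence :: "('a::{real_vector, topological_space}) itself \<Rightarrow> bool" where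
  "has_fundamental_bounded_sequence _ \<longleftrightarrow>
     (\<exists>Bs :: nat \<Rightarrow> 'a set. (\<forall>n. tvs_bounded (Bs n)) \<and>
        (\<forall>B. tvs_bounded B \<longrightarrow> (\<exists>n. B \<subseteq> Bs n)))"

definition property_PS :: "('a::{real_vector, topological_space}) itself \<Rightarrow> bool" where
  "property_PS _ \<longleftrightarrow>
     (\<forall>g :: nat \<Rightarrow> 'a. g \<longlonglongrightarrow> 0 \<longrightarrow>
        (\<exists>m n :: nat \<Rightarrow> nat. strict_mono m \<and> strict_mono n \<and>
           (\<lambda>k. real (m k) *\<^sub>R g (n k)) \<longlonglongrightarrow> 0))"

definition cs_star_network_at :: "'a::topological_space \<Rightarrow> 'a set set \<Rightarrow> bool" where
  "cs_star_network_at x N \<longleftrightarrow>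
     (\<forall>(s :: nat \<Rightarrow> 'a) V. s \<longlonglongrightarrow> x \<and> open V \<and> x \<in> V \<longrightarrow>
        (\<exists>A\<in>N. x \<in> A \<and> A \<subseteq> V \<and> infinite {n. s n \<in> A}))"

definition countable_cs_star_character :: "('a::topological_space) itself \<Rightarrow> bool" where
  "countable_cs_star_character _ \<longleftrightarrow>
     (\<forall>x :: 'a. \<exists>N. countable N \<and> cs_star_network_at x N)"

end

theory Submission
  imports Defs
begin

text \<open>Fix a fundamental sequence B_n of bounded sets and let T(B, m) be the union of {0} and
  the sets B/j for j \<ge> m. The countably many sets T(B_n, m) form a cs*-network at 0, and their
  translates one at every other point. Indeed, given g_k \<longrightarrow> 0, property (PS) yields
  m_k g_{n_k} \<longrightarrow> 0; null sequences are bounded, so all m_k g_{n_k} lie in a single B_n, and then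
  g_{n_k} \<in> T(B_n, M) for k > M. Boundedness of B_n puts T(B_n, M) inside any given
  neighbourhood of 0 once M is large.\<close>

lemma tvs_boundedI:
  fixes B :: "'a::{real_vector, topological_space} set"
  assumes "\<And>U. open U \<Longrightarrow> 0 \<in> U \<Longrightarrow> \<exists>d>0. \<forall>r. 0 < r \<and> r < d \<longrightarrow> (\<forall>y\<in>B. r *\<^sub>R y \<in> U)"
  shows "tvs_bounded B"
  unfolding tvs_bounded_def
proof (intro allI impI)
  fix U :: "'a set" assume "open U \<and> 0 \<in> U"
  then obtain d where "d > 0" and small: "\<forall>r. 0 < r \<and> r < d \<longrightarrow> (\<forall>y\<in>B. r *\<^sub>R y \<in> U)"
    using assms by meson
  show "\<exists>t>0. \<forall>s. s \<ge> t \<longrightarrow> B \<subseteq> (\<lambda>x. s *\<^sub>R x) ` U"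
  proof (intro exI[of _ "2 / d"] conjI allI impI subsetI)
    show "2 / d > 0" using \<open>d > 0\<close> by simp
    fix s y assume s: "s \<ge> 2 / d" and "y \<in> B"
    with \<open>d > 0\<close> have "s > 0" and "2 \<le> s * d"
      by (simp_all add: pos_divide_le_eq less_le_trans[OF _ s])
    then have "1 / s < d" by (simp add: divide_less_eq mult.commute)
    with \<open>s > 0\<close> have "(1 / s) *\<^sub>R y \<in> U" using small \<open>y \<in> B\<close> by simp
    moreover have "y = s *\<^sub>R ((1 / s) *\<^sub>R y)" using \<open>s > 0\<close> by simp
    ultimately show "y \<in> (\<lambda>x. s *\<^sub>R x) ` U" by blast
  qed
qed

lemma tvs_bounded_range_null_sequence:
  fixes c :: "nat \<Rightarrow> 'a::{real_vector, topological_ab_group_add}"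
  assumes sc: "tvs_scalar_continuous TYPE('a)" and lim: "c \<longlonglongrightarrow> 0"
  shows "tvs_bounded (range c)"
proof (rule tvs_boundedI)
  fix U :: "'a set" assume U: "open U" "0 \<in> U"
  have cont: "continuous_on UNIV (\<lambda>p::real \<times> 'a. fst p *\<^sub>R snd p)"
    using sc unfolding tvs_scalar_continuous_def by simp
  have scaled_in_U: "eventually (\<lambda>p. fst p *\<^sub>R snd p \<in> U) (nhds (r, y))"
    if "r *\<^sub>R y \<in> U" for r y
    using cont U(1) that continuous_on_open_vimage[of UNIV "\<lambda>p::real \<times> 'a. fst p *\<^sub>R snd p"]
    unfolding eventually_nhds by (auto intro!: exI[of _ "(\<lambda>p. fst p *\<^sub>R snd p) -` U"])
  obtain P Q where P: "eventually P (nhds (0::real))" and Q: "eventually Q (nhds (0::'a))"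
    and PQ: "\<And>r y. P r \<Longrightarrow> Q y \<Longrightarrow> r *\<^sub>R y \<in> U"
    using scaled_in_U[of 0 0] U(2) unfolding nhds_prod eventually_prod_filter by auto
  obtain K where K: "\<And>k. k \<ge> K \<Longrightarrow> Q (c k)"
    using eventually_compose_filterlim[OF Q lim] by (auto simp: eventually_sequentially)
  have "eventually (\<lambda>r::real. r *\<^sub>R c k \<in> U) (nhds 0)" for k
    using eventually_compose_filterlim[OF scaled_in_U[of 0 "c k"] tendsto_Pair[OF filterlim_ident tendsto_const]]
      U(2) by simp
  then have "eventually (\<lambda>r. \<forall>k\<in>{..<K}. r *\<^sub>R c k \<in> U) (nhds 0)"
    by (intro eventually_ball_finite) auto
  then have "eventually (\<lambda>r. (\<forall>k\<in>{..<K}. r *\<^sub>R c k \<in> U) \<and> P r) (nhds 0)"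
    using P by (rule eventually_conj)
  then obtain d where "d > 0" and d: "\<And>r. dist r 0 < d \<Longrightarrow> (\<forall>k\<in>{..<K}. r *\<^sub>R c k \<in> U) \<and> P r"
    unfolding eventually_nhds_metric by blast
  have "r *\<^sub>R c k \<in> U" if "0 < r" "r < d" for r k
    using d[of r] K[of k] PQ[of r "c k"] that by (cases "k < K") auto
  with \<open>d > 0\<close> show "\<exists>d>0. \<forall>r. 0 < r \<and> r < d \<longrightarrow> (\<forall>y\<in>range c. r *\<^sub>R y \<in> U)"
    by auto
qed

definition scaled_tail :: "'a::real_vector set \<Rightarrow> nat \<Rightarrow> 'a set" where
  "scaled_tail B m = insert 0 (\<Union>j\<in>{m..}. (\<lambda>y. (1 / real j) *\<^sub>R y) ` B)"

lemma scaled_tail_subset_nhds_zero: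
  fixes B :: "'a::{real_vector, topological_space} set"
  assumes "tvs_bounded B" "open U" "0 \<in> U"
  shows "\<exists>m. scaled_tail B m \<subseteq> U"
proof -
  obtain t where t: "\<And>s::real. s \<ge> t \<Longrightarrow> B \<subseteq> (\<lambda>y. s *\<^sub>R y) ` U"
    using assms unfolding tvs_bounded_def by blast
  define m where "m = Suc (nat \<lceil>t\<rceil>)"
  have "(1 / real j) *\<^sub>R y \<in> U" if j: "j \<ge> m" and y: "y \<in> B" for j y
  proof -
    have "real j \<ge> t" "real j > 0" using j unfolding m_def by linarith+
    then obtain u where "u \<in> U" "y = real j *\<^sub>R u" using t y by blast
    with \<open>real j > 0\<close> show ?thesis by simp
  qed
  then show ?thesis using assms(3) unfolding scaled_tail_def by blast
qed

lemma mem_scaled_tail: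
  assumes "real j *\<^sub>R z \<in> B" "m \<le> j" "0 < j"
  shows "z \<in> scaled_tail B m"
proof -
  have "z = (1 / real j) *\<^sub>R (real j *\<^sub>R z)" using assms(3) by simp
  then show ?thesis using assms unfolding scaled_tail_def by blast
qed

lemma infinite_Collect_strict_mono:
  fixes n :: "nat \<Rightarrow> nat"
  assumes "strict_mono n" "\<And>k. k \<ge> M \<Longrightarrow> P (n k)"
  shows "infinite {i. P i}"
proof
  assume "finite {i. P i}"
  moreover have "n ` {M..} \<subseteq> {i. P i}" using assms(2) by auto
  ultimately have "finite (n ` {M..})" by (rule finite_subset[rotated])
  then show False
    using strict_mono_imp_inj_on[OF assms(1)] finite_imageD infinite_Ici
    by (metis inj_on_subset subset_UNIV)
qed

lemma cs_star_network_at_translate: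
  fixes x :: "'a::topological_ab_group_add"
  assumes "cs_star_network_at 0 N"
  shows "cs_star_network_at x ((\<lambda>A. (\<lambda>y. x + y) ` A) ` N)"
  unfolding cs_star_network_at_def
proof (intro allI impI)
  fix s V assume sV: "s \<longlonglongrightarrow> x \<and> open V \<and> x \<in> V"
  have "(\<lambda>k. s k - x) \<longlonglongrightarrow> 0" using sV tendsto_diff[of s x sequentially "\<lambda>_. x" x] by simp
  moreover have "open ((\<lambda>y. x + y) -` V)"
    using sV continuous_on_open_vimage[of UNIV "\<lambda>y. x + y"] by (simp add: continuous_on_add)
  moreover have "0 \<in> (\<lambda>y. x + y) -` V" using sV by simp
  ultimately obtain A where "A \<in> N" "0 \<in> A" "A \<subseteq> (\<lambda>y. x + y) -` V"
    and "infinite {k. s k - x \<in> A}"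
    using assms unfolding cs_star_network_at_def by blast
  moreover have "{k. s k - x \<in> A} = {k. s k \<in> (\<lambda>y. x + y) ` A}"
    by (auto intro: image_eqI[of _ _ "s _ - x"])
  ultimately show "\<exists>A'\<in>(\<lambda>A. (\<lambda>y. x + y) ` A) ` N. x \<in> A' \<and> A' \<subseteq> V \<and> infinite {k. s k \<in> A'}"
    by (intro bexI[of _ "(\<lambda>y. x + y) ` A"]) (auto intro: image_eqI[of _ _ 0])
qed

lemma cs_star_network_at_zero_scaled_tails:
  fixes Bs :: "nat \<Rightarrow> 'a::{real_vector, topological_ab_group_add} set"
  assumes sc: "tvs_scalar_continuous TYPE('a)" and PS: "property_PS TYPE('a)"
    and bounded: "\<And>n. tvs_bounded (Bs n)"
    and fundamental: "\<And>B. tvs_bounded B \<Longrightarrow> \<exists>n. B \<subseteq> Bs n"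
  shows "cs_star_network_at 0 (range (\<lambda>(m, n). scaled_tail (Bs n) m))"
  unfolding cs_star_network_at_def
proof (intro allI impI)
  fix g :: "nat \<Rightarrow> 'a" and V :: "'a set" assume gV: "g \<longlonglongrightarrow> 0 \<and> open V \<and> 0 \<in> V"
  then obtain m n :: "nat \<Rightarrow> nat" where "strict_mono m" "strict_mono n"
    and null: "(\<lambda>k. real (m k) *\<^sub>R g (n k)) \<longlonglongrightarrow> 0"
    using PS unfolding property_PS_def by blast
  obtain b where b: "range (\<lambda>k. real (m k) *\<^sub>R g (n k)) \<subseteq> Bs b"
    using fundamental tvs_bounded_range_null_sequence[OF sc null] by blast
  obtain M where M: "scaled_tail (Bs b) M \<subseteq> V"
    using scaled_tail_subset_nhds_zero[OF bounded] gV by blast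
  have "g (n k) \<in> scaled_tail (Bs b) M" if "k \<ge> Suc M" for k
    using seq_suble[OF \<open>strict_mono m\<close>, of k] that b by (intro mem_scaled_tail) auto
  then have "infinite {i. g i \<in> scaled_tail (Bs b) M}"
    by (rule infinite_Collect_strict_mono[OF \<open>strict_mono n\<close>])
  moreover have "0 \<in> scaled_tail (Bs b) M" unfolding scaled_tail_def by simp
  ultimately show "\<exists>A\<in>range (\<lambda>(m, n). scaled_tail (Bs n) m).
      0 \<in> A \<and> A \<subseteq> V \<and> infinite {i. g i \<in> A}"
    using M by force
qed

theorem mainTheorem13:
  assumes "tvs_scalar_continuous TYPE('a::{real_vector, topological_ab_group_add})"
    and "has_fundamental_bounded_sequence TYPE('a)"
    and "property_PS TYPE('a)"
  shows "countable_cs_star_character TYPE('a)"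
  unfolding countable_cs_star_character_def
proof
  fix x :: 'a
  obtain Bs :: "nat \<Rightarrow> 'a set" where "\<And>n. tvs_bounded (Bs n)"
    and "\<And>B. tvs_bounded B \<Longrightarrow> \<exists>n. B \<subseteq> Bs n"
    using assms(2) unfolding has_fundamental_bounded_sequence_def by blast
  then have "cs_star_network_at 0 (range (\<lambda>(m, n). scaled_tail (Bs n) m))"
    by (rule cs_star_network_at_zero_scaled_tails[OF assms(1,3)])
  then have "cs_star_network_at x ((\<lambda>A. (\<lambda>y. x + y) ` A) ` range (\<lambda>(m, n). scaled_tail (Bs n) m))"
    by (rule cs_star_network_at_translate)
  moreover have "countable ((\<lambda>A. (\<lambda>y. x + y) ` A) ` range (\<lambda>(m, n). scaled_tail (Bs n) m))"
    by simp
  ultimately show "\<exists>N. countable N \<and> cs_star_network_at x N" by blast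
qed

end
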